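(* Let $g$ be an associative algebra equipped with a nondegenerate symmetric bilinear form $\langle\cdot,\cdot\rangle$ satisfying $\langle u v,w\rangle=\langle u,v w\rangle$ for all $u,v,w\in g$. Let $n\ge 1$ and let $\mathbf{g}=g\oplus\cdots\oplus g$ ($n$ copies) with componentwise multiplication and bilinear form $\langle\langle \mathbf{u},\mathbf{v}\rangle\rangle=\sum_{k=1}^n\langle u_k,v_k\rangle$. Let $\mathbf{A}$ be a linear operator on $\mathbf{g}$, written in components as $(\mathbf{A}(\mathbf{u}))_i=\sum_{j=1}^n A_{ij}(u_j)$ with linear operators $A_{ij}$ on $g$, and suppose $\mathbf{A}$ is skew-symmetric, i.e. $A_{ij}^*=-A_{ji}$ for all $i,j$. Let $\alpha$ be a constant. Then $\mathbf{A}$ satisfies mYB$(\mathbf{A};\alpha)$ on $\mathbf{g}$ if and only if all of the following hold: (1) mYB$(A_{jj};\alpha)$ for every $j=1,\dots,n$; (2) Hom$(A_{ij},A_{jj})$ for every $i\neq j$; (3) for every triple $i<j<k$ and all $X,Y\in g$: $[A_{ij}(X),A_{ik}(Y)]=A_{ik}\big([A_{kj}(X),Y]\big)+A_{ij}\big([X,A_{jk}(Y)]\big)$.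
   Context: $[X,Y]=XY-YX$ denotes the commutator (in $\mathbf{g}$ it is taken componentwise). For a linear operator $X$ on $g$, $X^*$ denotes its adjoint with respect to $\langle\cdot,\cdot\rangle$. For a linear operator $R$ on an associative algebra and a constant $\alpha$, the condition mYB$(R;\alpha)$ means $[R(X),R(Y)]=R\big([R(X),Y]+[X,R(Y)]\big)-\alpha[X,Y]$ for all $X,Y$. For linear operators $S,A$, the condition Hom$(S,A)$ means $[S(X),S(Y)]=S\big([A(X),Y]+[X,A(Y)]\big)$ for all $X,Y$. *)

theory Defs
  imports Complex_Main "HOL-Library.Function_Algebras"
begin

definition comm :: "'a::ring \<Rightarrow> 'a \<Rightarrow> 'a" where
  "comm x y = x * y - y * x"

definition assoc_algebra :: "('k::field \<Rightarrow> 'a::ring \<Rightarrow> 'a) \<Rightarrow> bool" where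
  "assoc_algebra sc \<longleftrightarrow> Vector_Spaces.vector_space sc \<and>
     (\<forall>c x y. sc c (x * y) = sc c x * y \<and> sc c (x * y) = x * sc c y)"

definition mYB :: "('k \<Rightarrow> 'a::ring \<Rightarrow> 'a) \<Rightarrow> 'a set \<Rightarrow> ('a \<Rightarrow> 'a) \<Rightarrow> 'k \<Rightarrow> bool" where
  "mYB sc S R \<alpha> \<longleftrightarrow> (\<forall>X\<in>S. \<forall>Y\<in>S.
     comm (R X) (R Y) = R (comm (R X) Y + comm X (R Y)) - sc \<alpha> (comm X Y))"

definition Hom :: "('a::ring \<Rightarrow> 'a) \<Rightarrow> ('a \<Rightarrow> 'a) \<Rightarrow> bool" where
  "Hom S A \<longleftrightarrow> (\<forall>X Y. comm (S X) (S Y) = S (comm (A X) Y + comm X (A Y)))"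

definition is_adjoint :: "('a \<Rightarrow> 'a \<Rightarrow> 'k) \<Rightarrow> ('a \<Rightarrow> 'a) \<Rightarrow> ('a \<Rightarrow> 'a) \<Rightarrow> bool" where
  "is_adjoint B X Y \<longleftrightarrow> (\<forall>u v. B (X u) v = B u (Y v))"

definition invariant_form :: "('k::field \<Rightarrow> 'a::ring \<Rightarrow> 'a) \<Rightarrow> ('a \<Rightarrow> 'a \<Rightarrow> 'k) \<Rightarrow> bool" where
  "invariant_form sc B \<longleftrightarrow>
     (\<forall>u. Vector_Spaces.linear sc (*) (B u)) \<and>
     (\<forall>u v. B u v = B v u) \<and>
     (\<forall>u. (\<forall>v. B u v = 0) \<longrightarrow> u = 0) \<and>
     (\<forall>u v w. B (u * v) w = B u (v * w))"

text \<open>The direct sum of n copies of g: functions nat => g vanishing outside {..<n},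
  with componentwise operations.\<close>
definition dsum :: "nat \<Rightarrow> (nat \<Rightarrow> 'a::zero) set" where
  "dsum n = {u. \<forall>i\<ge>n. u i = 0}"

definition dscale :: "('k \<Rightarrow> 'a \<Rightarrow> 'a) \<Rightarrow> 'k \<Rightarrow> (nat \<Rightarrow> 'a) \<Rightarrow> (nat \<Rightarrow> 'a)" where
  "dscale sc c u = (\<lambda>i. sc c (u i))"

definition dform :: "nat \<Rightarrow> ('a \<Rightarrow> 'a \<Rightarrow> 'k::comm_monoid_add) \<Rightarrow> (nat \<Rightarrow> 'a) \<Rightarrow> (nat \<Rightarrow> 'a) \<Rightarrow> 'k" where
  "dform n B u v = (\<Sum>k<n. B (u k) (v k))"

definition blockop :: "nat \<Rightarrow> (nat \<Rightarrow> nat \<Rightarrow> 'a \<Rightarrow> 'a::comm_monoid_add) \<Rightarrow> (nat \<Rightarrow> 'a) \<Rightarrow> (nat \<Rightarrow> 'a)" where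
  "blockop n A u = (\<lambda>i. if i < n then (\<Sum>j<n. A i j (u j)) else 0)"

end

theory Submission
  imports Defs
begin

text \<open>Write \<open>D\<^sub>i\<^sub>j\<^sub>k(x, y)\<close> (\<open>block_defect\<close>) for the \<open>i\<close>-th component of the mYB defect of the
  block operator at the pair of vectors carrying \<open>x\<close> in slot \<open>j\<close> and \<open>y\<close> in slot \<open>k\<close>. By
  bilinearity, mYB for the block operator amounts to the vanishing of all \<open>D\<^sub>i\<^sub>j\<^sub>k\<close>. Pairing
  \<open>D\<^sub>i\<^sub>j\<^sub>k(x, y)\<close> with \<open>z\<close> and moving the blocks across the form by skew-symmetry yields a sum
  of terms \<open>\<langle>[u, v], w\<rangle>\<close>, which is invariant under cyclic permutations of \<open>u, v, w\<close>. Hence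
  the pairing changes sign under \<open>(j, x) \<leftrightarrow> (k, y)\<close> and is invariant under the rotation
  \<open>(i, z) \<rightarrow> (j, x) \<rightarrow> (k, y) \<rightarrow> (i, z)\<close>; by nondegeneracy the vanishing of \<open>D\<^sub>i\<^sub>j\<^sub>k\<close> is
  invariant under all permutations of \<open>(i, j, k)\<close>. For sorted triples \<open>i \<le> j \<le> k\<close> it is
  exactly condition (1), (2) or (3); the case \<open>i = j < k\<close> is condition (2) for the pair \<open>(k, j)\<close>,
  rotated.\<close>

lemma comm_apply: "comm f g i = comm (f i) (g i)" for f g :: "'b \<Rightarrow> 'a::ring"
  by (simp add: comm_def)

lemma comm_zero_left [simp]: "comm 0 y = 0"
  and comm_zero_right [simp]: "comm y 0 = 0" for y :: "'a::ring"
  by (simp_all add: comm_def)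

lemma comm_swap: "comm x y = - comm y x" for x y :: "'a::ring"
  by (simp add: comm_def)

lemma comm_sum_left: "comm (sum f S) y = (\<Sum>a\<in>S. comm (f a) y)" for y :: "'a::ring"
  by (simp add: comm_def sum_distrib_left sum_distrib_right sum_subtractf)

lemma comm_sum_right: "comm y (sum f S) = (\<Sum>a\<in>S. comm y (f a))" for y :: "'a::ring"
  by (simp add: comm_def sum_distrib_left sum_distrib_right sum_subtractf)

lemma linear_imp_additive: "Vector_Spaces.linear s1 s2 f \<Longrightarrow> additive f"
  by unfold_locales (simp add: linear_iff_module_hom module_hom.add)

lemma vector_space_additive_scale: "Vector_Spaces.vector_space sc \<Longrightarrow> additive (sc c)"
  by unfold_locales (rule vector_space.vector_space_assms(1))

lemma linorder_wlog_triple: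
  fixes P :: "'a::linorder \<Rightarrow> 'a \<Rightarrow> 'a \<Rightarrow> bool"
  assumes sorted: "\<And>i j k. i \<le> j \<Longrightarrow> j \<le> k \<Longrightarrow> P i j k"
    and swap: "\<And>i j k. P i j k \<Longrightarrow> P i k j"
    and rotate: "\<And>i j k. P i j k \<Longrightarrow> P j k i"
  shows "P i j k"
  by (cases "i \<le> j"; cases "j \<le> k"; cases "i \<le> k")
    (meson sorted swap rotate linorder_linear order_trans)+

lemma invariant_form_sym: "invariant_form sc B \<Longrightarrow> B u v = B v u"
  by (simp add: invariant_form_def)

lemma invariant_form_assoc: "invariant_form sc B \<Longrightarrow> B (u * v) w = B u (v * w)"
  unfolding invariant_form_def by blast

lemma invariant_form_additive_right: "invariant_form sc B \<Longrightarrow> additive (B u)"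
  unfolding invariant_form_def by (blast intro: linear_imp_additive)

lemma invariant_form_additive_left: "invariant_form sc B \<Longrightarrow> additive (\<lambda>u. B u w)"
  using invariant_form_additive_right[of sc B w] by (simp add: invariant_form_sym[of sc B _ w])

lemma invariant_form_scale_left: "invariant_form sc B \<Longrightarrow> B (sc c u) v = c * B u v"
  unfolding invariant_form_def by (metis linear_iff_module_hom module_hom.scale)

lemma invariant_form_nondegenerate: "invariant_form sc B \<Longrightarrow> (\<forall>v. B u v = 0) \<longleftrightarrow> u = 0"
  by (metis invariant_form_def additive.zero invariant_form_additive_left)

lemma invariant_form_comm_cycle:
  assumes form: "invariant_form sc B"
  shows "B (comm u v) w = B (comm v w) u"
proof -
  note sym = invariant_form_sym[OF form] and assoc = invariant_form_assoc[OF form]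
  have "B (comm u v) w = B (u * v) w - B (v * u) w"
    unfolding comm_def by (rule additive.diff[OF invariant_form_additive_left[OF form]])
  also have "\<dots> = B (v * w) u - B (w * v) u"
    by (metis assoc sym)
  also have "\<dots> = B (comm v w) u"
    unfolding comm_def by (rule additive.diff[OF invariant_form_additive_left[OF form], symmetric])
  finally show ?thesis .
qed

definition block_defect ::
    "('k \<Rightarrow> 'a::ring \<Rightarrow> 'a) \<Rightarrow> (nat \<Rightarrow> nat \<Rightarrow> 'a \<Rightarrow> 'a) \<Rightarrow> 'k \<Rightarrow> nat \<Rightarrow> nat \<Rightarrow> nat \<Rightarrow> 'a \<Rightarrow> 'a \<Rightarrow> 'a"
  where "block_defect sc A \<alpha> i j k x y =
    comm (A i j x) (A i k y) - A i k (comm (A k j x) y) - A i j (comm x (A j k y))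
      + (if i = j \<and> i = k then sc \<alpha> (comm x y) else 0)"

definition block_mYB ::
    "('k \<Rightarrow> 'a::ring \<Rightarrow> 'a) \<Rightarrow> (nat \<Rightarrow> nat \<Rightarrow> 'a \<Rightarrow> 'a) \<Rightarrow> 'k \<Rightarrow> nat \<Rightarrow> nat \<Rightarrow> nat \<Rightarrow> bool"
  where "block_mYB sc A \<alpha> i j k \<longleftrightarrow> (\<forall>x y. block_defect sc A \<alpha> i j k x y = 0)"

lemma blockop_apply: "i < n \<Longrightarrow> blockop n A X i = (\<Sum>j<n. A i j (X j))"
  by (simp add: blockop_def)

lemma blockop_add:
  assumes "\<forall>i<n. \<forall>j<n. additive (A i j)"
  shows "blockop n A (U + V) = blockop n A U + blockop n A V"
  using assms by (auto simp: blockop_def additive.add sum.distrib)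

lemma blockop_mYB_component:
  assumes add: "\<forall>i<n. \<forall>j<n. additive (A i j)" and "i < n"
  shows "comm (blockop n A X) (blockop n A Y) i
      - (blockop n A (comm (blockop n A X) Y + comm X (blockop n A Y)) i - dscale sc \<alpha> (comm X Y) i)
    = (\<Sum>j<n. \<Sum>k<n. block_defect sc A \<alpha> i j k (X j) (Y k))"
proof -
  have outer: "comm (blockop n A X) (blockop n A Y) i = (\<Sum>j<n. \<Sum>k<n. comm (A i j (X j)) (A i k (Y k)))"
    using \<open>i < n\<close> by (simp add: comm_apply blockop_apply comm_sum_left comm_sum_right)
      (rule sum.swap)
  have "blockop n A (comm (blockop n A X) Y) i = (\<Sum>k<n. \<Sum>j<n. A i k (comm (A k j (X j)) (Y k)))"
    using \<open>i < n\<close> add by (simp add: blockop_apply comm_apply comm_sum_left additive.sum)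
  also have "\<dots> = (\<Sum>j<n. \<Sum>k<n. A i k (comm (A k j (X j)) (Y k)))"
    by (rule sum.swap)
  finally have inner_left: "blockop n A (comm (blockop n A X) Y) i
      = (\<Sum>j<n. \<Sum>k<n. A i k (comm (A k j (X j)) (Y k)))" .
  have inner_right: "blockop n A (comm X (blockop n A Y)) i
      = (\<Sum>j<n. \<Sum>k<n. A i j (comm (X j) (A j k (Y k))))"
    using \<open>i < n\<close> add by (simp add: blockop_apply comm_apply comm_sum_right additive.sum)
  have scalar: "dscale sc \<alpha> (comm X Y) i
      = (\<Sum>j<n. \<Sum>k<n. if i = j \<and> i = k then sc \<alpha> (comm (X j) (Y k)) else 0)"
  proof -
    have "(\<Sum>k<n. if i = j \<and> i = k then sc \<alpha> (comm (X j) (Y k)) else 0)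
        = (if i = j then sc \<alpha> (comm (X i) (Y i)) else 0)" for j
      using \<open>i < n\<close> by (cases "i = j") auto
    then show ?thesis
      using \<open>i < n\<close> by (simp add: dscale_def comm_apply)
  qed
  have inner: "blockop n A (comm (blockop n A X) Y + comm X (blockop n A Y)) i
      = (\<Sum>j<n. \<Sum>k<n. A i k (comm (A k j (X j)) (Y k)))
        + (\<Sum>j<n. \<Sum>k<n. A i j (comm (X j) (A j k (Y k))))"
    by (simp only: blockop_add[OF add] plus_fun_apply inner_left inner_right)
  show ?thesis
    unfolding outer inner scalar
    by (simp add: block_defect_def sum.distrib sum_subtractf algebra_simps)
qed

lemma mYB_blockop_iff_block_mYB:
  assumes add: "\<forall>i<n. \<forall>j<n. additive (A i j)" and add_sc: "additive (sc \<alpha>)"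
  shows "mYB (dscale sc) (dsum n) (blockop n A) \<alpha> \<longleftrightarrow> (\<forall>i<n. \<forall>j<n. \<forall>k<n. block_mYB sc A \<alpha> i j k)"
proof
  assume mYB: "mYB (dscale sc) (dsum n) (blockop n A) \<alpha>"
  show "\<forall>i<n. \<forall>j<n. \<forall>k<n. block_mYB sc A \<alpha> i j k"
  proof (intro allI impI, unfold block_mYB_def, intro allI)
    fix i j k x y assume ijk: "i < n" "j < n" "k < n"
    define X where "X = (0 :: nat \<Rightarrow> 'a)(j := x)"
    define Y where "Y = (0 :: nat \<Rightarrow> 'a)(k := y)"
    have "X \<in> dsum n" "Y \<in> dsum n"
      using ijk by (auto simp: X_def Y_def dsum_def)
    with mYB have "comm (blockop n A X) (blockop n A Y)
        = blockop n A (comm (blockop n A X) Y + comm X (blockop n A Y)) - dscale sc \<alpha> (comm X Y)"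
      unfolding mYB_def by blast
    then have "(\<Sum>j<n. \<Sum>k<n. block_defect sc A \<alpha> i j k (X j) (Y k)) = 0"
      using blockop_mYB_component[OF add \<open>i < n\<close>, of X Y sc \<alpha>] by simp
    moreover have "block_defect sc A \<alpha> i j' k' (X j') (Y k')
        = (if k' = k then if j' = j then block_defect sc A \<alpha> i j k x y else 0 else 0)"
      if "j' < n" "k' < n" for j' k'
      using that ijk add add_sc by (auto simp: X_def Y_def block_defect_def additive.zero)
    ultimately show "block_defect sc A \<alpha> i j k x y = 0"
      using ijk by simp
  qed
next
  assume blocks: "\<forall>i<n. \<forall>j<n. \<forall>k<n. block_mYB sc A \<alpha> i j k"
  show "mYB (dscale sc) (dsum n) (blockop n A) \<alpha>"
    unfolding mYB_def
  proof (intro ballI ext)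
    fix X Y :: "nat \<Rightarrow> 'a" and i assume XY: "X \<in> dsum n" "Y \<in> dsum n"
    show "comm (blockop n A X) (blockop n A Y) i
      = (blockop n A (comm (blockop n A X) Y + comm X (blockop n A Y)) - dscale sc \<alpha> (comm X Y)) i"
    proof (cases "i < n")
      case True
      then show ?thesis
        using blockop_mYB_component[OF add True, of X Y sc \<alpha>] blocks by (simp add: block_mYB_def)
    next
      case False
      then show ?thesis
        using XY add_sc by (simp add: blockop_def comm_apply dscale_def dsum_def additive.zero)
    qed
  qed
qed

lemma block_mYB_iff_offdiag:
  "i \<noteq> j \<Longrightarrow> block_mYB sc A \<alpha> i j k \<longleftrightarrow>
    (\<forall>x y. comm (A i j x) (A i k y) = A i k (comm (A k j x) y) + A i j (comm x (A j k y)))"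
  by (simp add: block_mYB_def block_defect_def algebra_simps)

lemma block_mYB_iff_Hom:
  "additive (A i j) \<Longrightarrow> i \<noteq> j \<Longrightarrow> block_mYB sc A \<alpha> i j j \<longleftrightarrow> Hom (A i j) (A j j)"
  by (simp add: block_mYB_iff_offdiag Hom_def additive.add)

lemma block_mYB_iff_mYB:
  "additive (A j j) \<Longrightarrow> block_mYB sc A \<alpha> j j j \<longleftrightarrow> mYB sc UNIV (A j j) \<alpha>"
  by (simp add: block_mYB_def block_defect_def mYB_def additive.add algebra_simps)

lemma block_defect_pairing:
  assumes form: "invariant_form sc B"
    and skew: "\<forall>i<n. \<forall>j<n. is_adjoint B (A i j) (\<lambda>v. - A j i v)"
    and "i < n" "j < n" "k < n"
  shows "B (block_defect sc A \<alpha> i j k x y) z =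
      B (comm (A i j x) (A i k y)) z + B (comm (A k j x) y) (A k i z) + B (comm x (A j k y)) (A j i z)
      + (if i = j \<and> i = k then \<alpha> * B (comm x y) z else 0)"
proof -
  note left = invariant_form_additive_left[OF form]
  have adjoint: "B (A a b u) v = - B u (A b a v)" if "a < n" "b < n" for a b u v
    using skew that additive.minus[OF invariant_form_additive_right[OF form]]
    unfolding is_adjoint_def by metis
  show ?thesis
    using assms(3-5)
    by (simp add: block_defect_def additive.add[OF left] additive.diff[OF left] additive.zero[OF left]
        adjoint invariant_form_scale_left[OF form])
qed

lemma block_mYB_iff_pairing:
  "invariant_form sc B \<Longrightarrow>
    block_mYB sc A \<alpha> i j k \<longleftrightarrow> (\<forall>x y z. B (block_defect sc A \<alpha> i j k x y) z = 0)"
  by (simp add: block_mYB_def invariant_form_nondegenerate)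

lemma block_mYB_swap:
  assumes form: "invariant_form sc B"
    and skew: "\<forall>i<n. \<forall>j<n. is_adjoint B (A i j) (\<lambda>v. - A j i v)"
    and "i < n" "j < n" "k < n" and "block_mYB sc A \<alpha> i j k"
  shows "block_mYB sc A \<alpha> i k j"
proof -
  have "B (block_defect sc A \<alpha> i k j y x) z = - B (block_defect sc A \<alpha> i j k x y) z" for x y z
    using assms(3-5)
    by (simp add: block_defect_pairing[OF form skew] additive.minus[OF invariant_form_additive_left[OF form]]
        comm_swap[of "A i k y" "A i j x"] comm_swap[of "A j k y" x]
        comm_swap[of y "A k j x"] comm_swap[of y x] conj_commute)
  with assms(6) show ?thesis
    by (simp add: block_mYB_iff_pairing[OF form])
qed

lemma block_mYB_rotate:
  assumes form: "invariant_form sc B"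
    and skew: "\<forall>i<n. \<forall>j<n. is_adjoint B (A i j) (\<lambda>v. - A j i v)"
    and "i < n" "j < n" "k < n" and "block_mYB sc A \<alpha> i j k"
  shows "block_mYB sc A \<alpha> j k i"
proof -
  have "B (block_defect sc A \<alpha> j k i y z) x = B (block_defect sc A \<alpha> i j k x y) z" for x y z
    using assms(3-5)
    by (simp add: block_defect_pairing[OF form skew] invariant_form_comm_cycle[OF form, of x]
        invariant_form_comm_cycle[OF form, of "A i j x"] invariant_form_comm_cycle[OF form, of "A k j x"]
        ac_simps)
  with assms(6) show ?thesis
    by (simp add: block_mYB_iff_pairing[OF form])
qed

lemma block_mYB_sorted:
  assumes form: "invariant_form sc B"
    and skew: "\<forall>i<n. \<forall>j<n. is_adjoint B (A i j) (\<lambda>v. - A j i v)"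
    and add: "\<forall>i<n. \<forall>j<n. additive (A i j)"
    and diag: "\<forall>j<n. mYB sc UNIV (A j j) \<alpha>"
    and Hom: "\<forall>i<n. \<forall>j<n. i \<noteq> j \<longrightarrow> Hom (A i j) (A j j)"
    and triple: "\<forall>i j k. i < j \<and> j < k \<and> k < n \<longrightarrow> (\<forall>X Y.
              comm (A i j X) (A i k Y) = A i k (comm (A k j X) Y) + A i j (comm X (A j k Y)))"
    and bounds: "i \<le> j" "j \<le> k" "k < n"
  shows "block_mYB sc A \<alpha> i j k"
proof -
  consider "i = j" "j = k" | "i < j" "j = k" | "i < j" "j < k" | "i = j" "j < k"
    using bounds by linarith
  then show ?thesis
  proof cases
    case 1
    then show ?thesis using diag add bounds by (simp add: block_mYB_iff_mYB)
  next
    case 2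
    then show ?thesis using Hom add bounds by (simp add: block_mYB_iff_Hom)
  next
    case 3
    then show ?thesis using triple bounds by (simp add: block_mYB_iff_offdiag)
  next
    case 4
    then have "k \<noteq> j" "j < n"
      using bounds by simp_all
    with Hom add bounds have "block_mYB sc A \<alpha> k j j"
      by (simp add: block_mYB_iff_Hom)
    then have "block_mYB sc A \<alpha> j j k"
      using block_mYB_rotate[OF form skew, where i = k and j = j and k = j] bounds \<open>j < n\<close> by blast
    with 4 show ?thesis
      by simp
  qed
qed

lemma all_block_mYB_iff:
  assumes form: "invariant_form sc B"
    and skew: "\<forall>i<n. \<forall>j<n. is_adjoint B (A i j) (\<lambda>v. - A j i v)"
    and add: "\<forall>i<n. \<forall>j<n. additive (A i j)"
  shows "(\<forall>i<n. \<forall>j<n. \<forall>k<n. block_mYB sc A \<alpha> i j k) \<longleftrightarrow>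
           (\<forall>j<n. mYB sc UNIV (A j j) \<alpha>) \<and>
           (\<forall>i<n. \<forall>j<n. i \<noteq> j \<longrightarrow> Hom (A i j) (A j j)) \<and>
           (\<forall>i j k. i < j \<and> j < k \<and> k < n \<longrightarrow> (\<forall>X Y.
              comm (A i j X) (A i k Y) = A i k (comm (A k j X) Y) + A i j (comm X (A j k Y))))"
    (is "?blocks \<longleftrightarrow> ?diag \<and> ?Hom \<and> ?triple")
proof
  assume blocks: ?blocks
  show "?diag \<and> ?Hom \<and> ?triple"
  proof (intro conjI allI impI)
    fix j assume "j < n"
    then show "mYB sc UNIV (A j j) \<alpha>"
      using blocks add by (simp add: flip: block_mYB_iff_mYB)
  next
    fix i j assume "i < n" "j < n" "i \<noteq> j"
    moreover from this blocks have "block_mYB sc A \<alpha> i j j" by blast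
    ultimately show "Hom (A i j) (A j j)"
      using add by (simp add: block_mYB_iff_Hom)
  next
    fix i j k X Y assume ijk: "i < j \<and> j < k \<and> k < n"
    with blocks have "block_mYB sc A \<alpha> i j k" by simp
    with ijk show "comm (A i j X) (A i k Y) = A i k (comm (A k j X) Y) + A i j (comm X (A j k Y))"
      by (simp add: block_mYB_iff_offdiag)
  qed
next
  assume "?diag \<and> ?Hom \<and> ?triple"
  then have sorted: "block_mYB sc A \<alpha> i j k" if "i \<le> j" "j \<le> k" "k < n" for i j k
    by (elim conjE) (rule block_mYB_sorted[OF form skew add _ _ _ that])
  define P where "P i j k \<longleftrightarrow> (i < n \<longrightarrow> j < n \<longrightarrow> k < n \<longrightarrow> block_mYB sc A \<alpha> i j k)" for i j k
  have "P i j k" for i j k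
  proof (rule linorder_wlog_triple[of P])
    show "P i j k" if "i \<le> j" "j \<le> k" for i j k
      using sorted that unfolding P_def by blast
    show "P i k j" if "P i j k" for i j k
      using block_mYB_swap[OF form skew, of i j k] that unfolding P_def by blast
    show "P j k i" if "P i j k" for i j k
      using block_mYB_rotate[OF form skew, of i j k] that unfolding P_def by blast
  qed
  then show ?blocks
    unfolding P_def by blast
qed

theorem proposition3:
  fixes sc :: "'k::field \<Rightarrow> 'a::ring \<Rightarrow> 'a"
    and B :: "'a \<Rightarrow> 'a \<Rightarrow> 'k"
    and n :: nat
    and A :: "nat \<Rightarrow> nat \<Rightarrow> 'a \<Rightarrow> 'a"
    and \<alpha> :: 'k
  assumes alg: "assoc_algebra sc"
    and form: "invariant_form sc B"
    and n: "n \<ge> 1"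
    and lin: "\<forall>i<n. \<forall>j<n. Vector_Spaces.linear sc sc (A i j)"
    and skew: "\<forall>i<n. \<forall>j<n. is_adjoint B (A i j) (\<lambda>v. - A j i v)"
  shows "mYB (dscale sc) (dsum n) (blockop n A) \<alpha> \<longleftrightarrow>
           (\<forall>j<n. mYB sc UNIV (A j j) \<alpha>) \<and>
           (\<forall>i<n. \<forall>j<n. i \<noteq> j \<longrightarrow> Hom (A i j) (A j j)) \<and>
           (\<forall>i j k. i < j \<and> j < k \<and> k < n \<longrightarrow> (\<forall>X Y.
              comm (A i j X) (A i k Y) = A i k (comm (A k j X) Y) + A i j (comm X (A j k Y))))"
proof -
  have add: "\<forall>i<n. \<forall>j<n. additive (A i j)"
    using lin by (blast intro: linear_imp_additive)
  have "additive (sc \<alpha>)"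
    using alg by (simp add: assoc_algebra_def vector_space_additive_scale)
  from add this have "mYB (dscale sc) (dsum n) (blockop n A) \<alpha> \<longleftrightarrow>
      (\<forall>i<n. \<forall>j<n. \<forall>k<n. block_mYB sc A \<alpha> i j k)"
    by (rule mYB_blockop_iff_block_mYB)
  then show ?thesis
    using all_block_mYB_iff[OF form skew add] by (rule trans)
qed

end
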